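(* Let $(\Re,\oplus,\circ)$ be a commutative Krasner hyperring with identity $1\neq 0$, let $N$ be a proper hyperideal of $\Re$, and let $\phi:L(\Re)\to L(\Re)\cup\{\emptyset\}$ be a function with $\phi(N)\subseteq N$. Then the following are equivalent: (i) $N$ is a $\phi$-primary hyperideal of $\Re$; (ii) for every $a\in\Re-\sqrt{N}$, $(N:a)=N\cup(\phi(N):a)$; (iii) for every $a\in\Re-\sqrt{N}$, $(N:a)=N$ or $(N:a)=(\phi(N):a)$; (iv) for all hyperideals $K,L$ of $\Re$ with $K\circ L\subseteq N$ and $K\circ L\not\subseteq\phi(N)$, we have $K\subseteq N$ or $L\subseteq\sqrt{N}$.
   Context: A commutative Krasner hyperring with identity is $(\Re,\oplus,\circ)$ where $(\Re,\oplus)$ is a canonical hypergroup (the hyperoperation $\oplus$ is associative and commutative; there is $0$ with $a\oplus 0=\{a\}$; each $a$ has a unique $-a$ with $0\in a\oplus(-a)$; and $c\in a\oplus b$ implies $b\in c\oplus(-a)$ and $a\in c\oplus(-b)$), $(\Re,\circ)$ is a commutative semigroup with identity $1\neq0$ and $a\circ 0=0$, and $\circ$ distributes over $\oplus$. A hyperideal is a nonempty $N\subseteq\Re$ with $a\oplus(-b)\subseteq N$ and $r\circ a\in N$ for all $a,b\in N$, $r\in\Re$; $L(\Re)$ is the set of hyperideals. For $I\in L(\Re)\cup\{\emptyset\}$ and $a\in\Re$, $(I:a)=\{x\in\Re: x\circ a\in I\}$; $\sqrt{N}=\{x\in\Re: x^n\in N\text{ for some }n\geq1\}$. For hyperideals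 $K,L$, $K\circ L$ is the hyperideal generated by $\{k\circ l\}$. "$x\in N-\phi(N)$" means $x\in N$, $x\notin\phi(N)$. A proper hyperideal $N$ is $\phi$-primary if for all $a,b\in\Re$, $a\circ b\in N-\phi(N)$ implies $a\in N$ or $b^k\in N$ for some $k\in\mathbb{N}$. *)

theory Defs
  imports Main
begin

definition hneg :: "('a \<Rightarrow> 'a \<Rightarrow> 'a set) \<Rightarrow> 'a \<Rightarrow> 'a \<Rightarrow> 'a" where
  "hneg add zero a = (THE b. zero \<in> add a b)"

definition canonical_hypergroup :: "('a \<Rightarrow> 'a \<Rightarrow> 'a set) \<Rightarrow> 'a \<Rightarrow> bool" where
  "canonical_hypergroup add zero \<longleftrightarrow>
     (\<forall>a b. add a b \<noteq> {}) \<and>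
     (\<forall>a b c. (\<Union>x\<in>add a b. add x c) = (\<Union>x\<in>add b c. add a x)) \<and>
     (\<forall>a b. add a b = add b a) \<and>
     (\<forall>a. add a zero = {a}) \<and>
     (\<forall>a. \<exists>!b. zero \<in> add a b) \<and>
     (\<forall>a b c. c \<in> add a b \<longrightarrow>
         b \<in> add c (hneg add zero a) \<and> a \<in> add c (hneg add zero b))"

definition krasner_hyperring ::
  "('a \<Rightarrow> 'a \<Rightarrow> 'a set) \<Rightarrow> ('a \<Rightarrow> 'a \<Rightarrow> 'a) \<Rightarrow> 'a \<Rightarrow> 'a \<Rightarrow> bool" where
  "krasner_hyperring add mult zero one \<longleftrightarrow>
     canonical_hypergroup add zero \<and>
     (\<forall>a b c. mult (mult a b) c = mult a (mult b c)) \<and>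
     (\<forall>a b. mult a b = mult b a) \<and>
     (\<forall>a. mult one a = a) \<and>
     one \<noteq> zero \<and>
     (\<forall>a. mult a zero = zero) \<and>
     (\<forall>a b c. mult a ` add b c = add (mult a b) (mult a c))"

definition hyperideal ::
  "('a \<Rightarrow> 'a \<Rightarrow> 'a set) \<Rightarrow> ('a \<Rightarrow> 'a \<Rightarrow> 'a) \<Rightarrow> 'a \<Rightarrow> 'a set \<Rightarrow> bool" where
  "hyperideal add mult zero N \<longleftrightarrow>
     N \<noteq> {} \<and>
     (\<forall>a\<in>N. \<forall>b\<in>N. add a (hneg add zero b) \<subseteq> N) \<and>
     (\<forall>r. \<forall>a\<in>N. mult r a \<in> N)"

definition hcolon :: "('a \<Rightarrow> 'a \<Rightarrow> 'a) \<Rightarrow> 'a set \<Rightarrow> 'a \<Rightarrow> 'a set" where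
  "hcolon mult I a = {x. mult x a \<in> I}"

definition hpow :: "('a \<Rightarrow> 'a \<Rightarrow> 'a) \<Rightarrow> 'a \<Rightarrow> 'a \<Rightarrow> nat \<Rightarrow> 'a" where
  "hpow mult one x n = ((mult x) ^^ n) one"

definition hradical :: "('a \<Rightarrow> 'a \<Rightarrow> 'a) \<Rightarrow> 'a \<Rightarrow> 'a set \<Rightarrow> 'a set" where
  "hradical mult one N = {x. \<exists>n\<ge>1. hpow mult one x n \<in> N}"

definition hideal_prod ::
  "('a \<Rightarrow> 'a \<Rightarrow> 'a set) \<Rightarrow> ('a \<Rightarrow> 'a \<Rightarrow> 'a) \<Rightarrow> 'a \<Rightarrow> 'a set \<Rightarrow> 'a set \<Rightarrow> 'a set" where
  "hideal_prod add mult zero K L =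
     \<Inter>{I. hyperideal add mult zero I \<and> {mult k l | k l. k \<in> K \<and> l \<in> L} \<subseteq> I}"

definition phi_primary ::
  "('a \<Rightarrow> 'a \<Rightarrow> 'a set) \<Rightarrow> ('a \<Rightarrow> 'a \<Rightarrow> 'a) \<Rightarrow> 'a \<Rightarrow> 'a \<Rightarrow> ('a set \<Rightarrow> 'a set) \<Rightarrow> 'a set \<Rightarrow> bool" where
  "phi_primary add mult zero one phi N \<longleftrightarrow>
     hyperideal add mult zero N \<and> N \<noteq> UNIV \<and>
     (\<forall>a b. mult a b \<in> N \<and> mult a b \<notin> phi N \<longrightarrow>
        a \<in> N \<or> (\<exists>k\<ge>1. hpow mult one b k \<in> N))"

end

(* By (ii), (N : a) is the union of the hyperideals N and (phi(N) : a),
   and a hyperideal that is the union of two hyperideals equals one of them; this gives (iii).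
   For (iii) => (iv): if a \<in> K - N, then (N : b) \<noteq> N for every b \<in> L - \<surd>N, hence K b \<subseteq> phi(N).
   Since \<surd>N is closed under differences, every element of L \<inter> \<surd>N is a difference of two
   elements of L - \<surd>N, so K \<circ> L \<subseteq> phi(N). For (iv) => (i), apply (iv) to the principal
   hyperideals generated by a and b. *)

theory Submission
  imports Defs
begin

locale comm_krasner_hyperring =
  fixes add :: "'a \<Rightarrow> 'a \<Rightarrow> 'a set" and mult :: "'a \<Rightarrow> 'a \<Rightarrow> 'a" and zero one :: 'a
  assumes krasner: "krasner_hyperring add mult zero one"
begin

abbreviation neg where "neg \<equiv> hneg add zero"
abbreviation ideal where "ideal \<equiv> hyperideal add mult zero"
abbreviation pow where "pow \<equiv> hpow mult one"
abbreviation rad where "rad \<equiv> hradical mult one"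
abbreviation colon where "colon \<equiv> hcolon mult"
abbreviation ideal_prod where "ideal_prod \<equiv> hideal_prod add mult zero"

lemma canonical: "canonical_hypergroup add zero"
  using krasner unfolding krasner_hyperring_def by metis

lemma mult_assoc: "mult (mult a b) c = mult a (mult b c)"
  using krasner unfolding krasner_hyperring_def by metis

lemma mult_comm: "mult a b = mult b a"
  using krasner unfolding krasner_hyperring_def by metis

lemma mult_one_left [simp]: "mult one a = a"
  using krasner unfolding krasner_hyperring_def by metis

lemma mult_zero_right [simp]: "mult a zero = zero"
  using krasner unfolding krasner_hyperring_def by metis

lemma distrib: "mult a ` add b c = add (mult a b) (mult a c)"
  using krasner unfolding krasner_hyperring_def by metis

lemma add_nonempty: "add a b \<noteq> {}"
  using canonical unfolding canonical_hypergroup_def by metis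

lemma add_comm: "add a b = add b a"
  using canonical unfolding canonical_hypergroup_def by metis

lemma add_zero [simp]: "add a zero = {a}"
  using canonical unfolding canonical_hypergroup_def by metis

lemma ex1_zero_in_add: "\<exists>!b. zero \<in> add a b"
  using canonical unfolding canonical_hypergroup_def by metis

lemma add_reversible: "c \<in> add a b \<Longrightarrow> b \<in> add c (neg a) \<and> a \<in> add c (neg b)"
  using canonical unfolding canonical_hypergroup_def by metis

lemma mult_left_commute: "mult a (mult b c) = mult b (mult a c)"
  using mult_assoc mult_comm by metis

lemma mult_one_right [simp]: "mult a one = a"
  using mult_comm mult_one_left by metis

lemma mult_zero_left [simp]: "mult zero a = zero"
  using mult_comm mult_zero_right by metis

lemma zero_add [simp]: "add zero a = {a}"
  using add_comm add_zero by metis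

lemma zero_in_add_neg: "zero \<in> add a (neg a)"
  unfolding hneg_def using ex1_zero_in_add by (rule theI')

lemma neg_unique: "zero \<in> add a b \<Longrightarrow> b = neg a"
  using ex1_zero_in_add zero_in_add_neg by blast

lemma neg_neg [simp]: "neg (neg a) = a"
  using neg_unique zero_in_add_neg add_comm by metis

lemma mult_neg_right: "mult a (neg b) = neg (mult a b)"
proof (rule neg_unique)
  have "zero \<in> mult a ` add b (neg b)"
    using zero_in_add_neg by (metis image_eqI mult_zero_right)
  then show "zero \<in> add (mult a b) (mult a (neg b))"
    by (simp add: distrib)
qed

lemma ideal_zero: "ideal I \<Longrightarrow> zero \<in> I"
  unfolding hyperideal_def by (metis all_not_in_conv mult_zero_left)

lemma ideal_mult_left: "ideal I \<Longrightarrow> x \<in> I \<Longrightarrow> mult r x \<in> I"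
  unfolding hyperideal_def by blast

lemma ideal_mult_right: "ideal I \<Longrightarrow> x \<in> I \<Longrightarrow> mult x r \<in> I"
  using ideal_mult_left mult_comm by metis

lemma ideal_diff: "ideal I \<Longrightarrow> x \<in> I \<Longrightarrow> y \<in> I \<Longrightarrow> z \<in> add x (neg y) \<Longrightarrow> z \<in> I"
  unfolding hyperideal_def by blast

lemma ideal_neg: "ideal I \<Longrightarrow> x \<in> I \<Longrightarrow> neg x \<in> I"
  using ideal_diff[of I zero x "neg x"] ideal_zero by simp

lemma ideal_add: "ideal I \<Longrightarrow> x \<in> I \<Longrightarrow> y \<in> I \<Longrightarrow> z \<in> add x y \<Longrightarrow> z \<in> I"
  using ideal_diff[of I x "neg y" z] ideal_neg by simp

lemma ideal_one_eq_UNIV: "ideal I \<Longrightarrow> one \<in> I \<Longrightarrow> I = UNIV"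
  using ideal_mult_left[of I one] by (metis UNIV_eq_I mult_one_right)

lemma ideal_range_mult: "ideal (range (\<lambda>r. mult r a))"
  unfolding hyperideal_def
proof (intro conjI ballI allI subsetI)
  fix x y z assume "x \<in> range (\<lambda>r. mult r a)" "y \<in> range (\<lambda>r. mult r a)" "z \<in> add x (neg y)"
  then obtain r s where "z \<in> add (mult a r) (mult a (neg s))"
    using mult_comm mult_neg_right by auto
  then obtain t where "z = mult a t"
    by (metis distrib imageE)
  then show "z \<in> range (\<lambda>r. mult r a)"
    using mult_comm by auto
next
  fix r x assume "x \<in> range (\<lambda>r. mult r a)"
  then obtain s where "x = mult s a"
    by blast
  then have "mult r x = mult (mult r s) a"
    by (simp add: mult_assoc)
  then show "mult r x \<in> range (\<lambda>r. mult r a)"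
    by (metis rangeI)
qed auto

lemma mem_range_mult_self: "a \<in> range (\<lambda>r. mult r a)"
  using rangeI[of "\<lambda>r. mult r a" one] by simp

lemma ideal_colon:
  assumes "ideal I" shows "ideal (colon I a)"
  unfolding hyperideal_def
proof (intro conjI ballI allI subsetI)
  have "zero \<in> colon I a"
    using ideal_zero[OF assms] unfolding hcolon_def by simp
  then show "colon I a \<noteq> {}"
    by blast
next
  fix x y z assume "x \<in> colon I a" "y \<in> colon I a" "z \<in> add x (neg y)"
  then have "mult a x \<in> I" "mult a y \<in> I" "mult a z \<in> mult a ` add x (neg y)"
    unfolding hcolon_def by (simp_all add: mult_comm)
  then have "mult a z \<in> I"
    using ideal_diff[OF assms, of "mult a x" "mult a y"] by (simp add: distrib mult_neg_right)
  then show "z \<in> colon I a"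
    unfolding hcolon_def by (simp add: mult_comm)
next
  fix r x assume "x \<in> colon I a"
  then show "mult r x \<in> colon I a"
    using ideal_mult_left[OF assms, of "mult x a" r] unfolding hcolon_def by (simp add: mult_assoc)
qed

lemma subset_colon: "ideal I \<Longrightarrow> I \<subseteq> colon I a"
  unfolding hcolon_def using ideal_mult_right by blast

lemma colon_empty [simp]: "colon {} a = {}"
  unfolding hcolon_def by simp

lemma pow_0 [simp]: "pow x 0 = one"
  unfolding hpow_def by simp

lemma pow_Suc: "pow x (Suc n) = mult (pow x n) x"
  unfolding hpow_def by (simp add: mult_comm)

text \<open>There is no binomial theorem in a hyperring. Instead induct on \<open>m\<close> and \<open>n\<close> over all
  hyperideals: in \<open>(I : x)\<close> the exponent of \<open>x\<close> drops by one, in \<open>(I : y)\<close> that of \<open>y\<close>, so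
  \<open>w = z^(m + n - 1)\<close> satisfies \<open>w x, w y \<in> I\<close>, whence \<open>z^(m + n) = w z \<in> w x - w y \<subseteq> I\<close>.\<close>
lemma pow_mem_if_mem_add_neg:
  assumes "ideal I" "pow x m \<in> I" "pow y n \<in> I" "z \<in> add x (neg y)"
  shows "pow z (m + n) \<in> I"
  using assms(1-3)
proof (induction m arbitrary: I n)
  case 0
  then show ?case
    using ideal_one_eq_UNIV[OF "0.prems"(1)] by simp
next
  case (Suc m)
  note IH_m = Suc.IH
  from Suc.prems show ?case
  proof (induction n arbitrary: I)
    case 0
    then show ?case
      using ideal_one_eq_UNIV[OF "0.prems"(1)] by simp
  next
    case (Suc n)
    define w where "w = pow z (m + Suc n)"
    have "w \<in> colon I x"
      unfolding w_def
    proof (rule IH_m)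
      show "ideal (colon I x)"
        using Suc.prems(1) by (rule ideal_colon)
      show "pow x m \<in> colon I x"
        using Suc.prems(2) unfolding hcolon_def by (simp add: pow_Suc)
      show "pow y (Suc n) \<in> colon I x"
        using Suc.prems(1,3) subset_colon by blast
    qed
    moreover have "w \<in> colon I y"
    proof -
      have "pow z (Suc m + n) \<in> colon I y"
      proof (rule Suc.IH)
        show "ideal (colon I y)"
          using Suc.prems(1) by (rule ideal_colon)
        show "pow x (Suc m) \<in> colon I y"
          using Suc.prems(1,2) subset_colon by blast
        show "pow y n \<in> colon I y"
          using Suc.prems(3) unfolding hcolon_def by (simp add: pow_Suc)
      qed
      then show ?thesis
        by (simp add: w_def)
    qed
    ultimately have "mult w x \<in> I" "mult w (neg y) \<in> I"
      using ideal_neg[OF Suc.prems(1)] unfolding hcolon_def by (simp_all add: mult_neg_right)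
    moreover have "pow z (Suc m + Suc n) \<in> add (mult w x) (mult w (neg y))"
      using assms(4) by (auto simp: w_def pow_Suc simp flip: distrib)
    ultimately show ?case
      using ideal_add[OF Suc.prems(1)] by blast
  qed
qed

lemma mem_rad_if_mem_add_neg:
  assumes "ideal N" "x \<in> rad N" "y \<in> rad N" "z \<in> add x (neg y)"
  shows "z \<in> rad N"
proof -
  obtain m n where "m \<ge> 1" "pow x m \<in> N" "pow y n \<in> N"
    using assms(2,3) unfolding hradical_def by blast
  then have "pow z (m + n) \<in> N" "m + n \<ge> 1"
    using pow_mem_if_mem_add_neg[OF assms(1) _ _ assms(4)] by simp_all
  then show ?thesis
    unfolding hradical_def by blast
qed

lemma ideal_union_cases:
  assumes "ideal A" "ideal B" "ideal (A \<union> B)"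
  shows "A \<subseteq> B \<or> B \<subseteq> A"
proof (rule ccontr)
  assume "\<not> (A \<subseteq> B \<or> B \<subseteq> A)"
  then obtain x y where x: "x \<in> A" "x \<notin> B" and y: "y \<in> B" "y \<notin> A"
    by blast
  obtain z where z: "z \<in> add x (neg y)"
    using add_nonempty by blast
  then have "z \<in> A \<union> B"
    using ideal_diff[OF assms(3)] x(1) y(1) by blast
  moreover have "neg y \<in> add z (neg x)" "x \<in> add z y"
    using add_reversible[OF z] by simp_all
  ultimately show False
  proof (elim UnE)
    assume "z \<in> A" "neg y \<in> add z (neg x)"
    then have "neg y \<in> A"
      using ideal_diff[OF assms(1) _ x(1)] by blast
    then show False
      using ideal_neg[OF assms(1), of "neg y"] y(2) by simp
  next
    assume "z \<in> B" "x \<in> add z y"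
    then show False
      using ideal_add[OF assms(2) _ y(1)] x(2) by blast
  qed
qed

lemma mem_ideal_prod: "k \<in> K \<Longrightarrow> l \<in> L \<Longrightarrow> mult k l \<in> ideal_prod K L"
  unfolding hideal_prod_def by blast

lemma ideal_prod_subset:
  "ideal J \<Longrightarrow> (\<And>k l. k \<in> K \<Longrightarrow> l \<in> L \<Longrightarrow> mult k l \<in> J) \<Longrightarrow> ideal_prod K L \<subseteq> J"
  unfolding hideal_prod_def by blast

lemma colon_eq_union_if_phi_primary:
  assumes "phi_primary add mult zero one phi N" "phi N \<subseteq> N" "a \<notin> rad N"
  shows "colon N a = N \<union> colon (phi N) a"
proof
  show "colon N a \<subseteq> N \<union> colon (phi N) a"
    using assms(1,3) unfolding phi_primary_def hradical_def hcolon_def by blast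
  show "N \<union> colon (phi N) a \<subseteq> colon N a"
    using assms(1,2) subset_colon unfolding phi_primary_def hcolon_def by blast
qed

lemma colon_eq_cases_if_colon_eq_union:
  assumes N: "ideal N" and P: "ideal P \<or> P = {}" and eq: "colon N a = N \<union> colon P a"
  shows "colon N a = N \<or> colon N a = colon P a"
  using P
proof
  assume "ideal P"
  moreover have "ideal (N \<union> colon P a)"
    using ideal_colon[OF N, of a] eq by simp
  ultimately have "N \<subseteq> colon P a \<or> colon P a \<subseteq> N"
    using ideal_union_cases[OF N ideal_colon] by blast
  then show ?thesis
    using eq by blast
next
  assume "P = {}"
  then show ?thesis
    using eq by simp
qed

lemma ideal_prod_property_if_colon_eq_cases:
  assumes N: "ideal N" and P: "ideal P \<or> P = {}"
    and colon_cases: "\<And>a. a \<notin> rad N \<Longrightarrow> colon N a = N \<or> colon N a = colon P a"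
    and K: "ideal K" and L: "ideal L"
    and prod_N: "ideal_prod K L \<subseteq> N" and prod_P: "\<not> ideal_prod K L \<subseteq> P"
  shows "K \<subseteq> N \<or> L \<subseteq> rad N"
proof (rule ccontr)
  assume "\<not> (K \<subseteq> N \<or> L \<subseteq> rad N)"
  then obtain a c where a: "a \<in> K" "a \<notin> N" and c: "c \<in> L" "c \<notin> rad N"
    by blast
  have outside_rad: "mult k b \<in> P" if "k \<in> K" "b \<in> L" "b \<notin> rad N" for k b
  proof -
    have "K \<subseteq> colon N b"
      using prod_N mem_ideal_prod that(2) unfolding hcolon_def by blast
    then have "colon N b = colon P b"
      using colon_cases[OF that(3)] a by blast
    then show ?thesis
      using \<open>K \<subseteq> colon N b\<close> that(1) unfolding hcolon_def by blast
  qed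
  then have "ideal P"
    using P a(1) c by blast
  have "mult k l \<in> P" if k: "k \<in> K" and l: "l \<in> L" for k l
  proof (cases "l \<in> rad N")
    case False
    then show ?thesis
      using outside_rad k l by blast
  next
    case True
    obtain z where z: "z \<in> add l c"
      using add_nonempty by blast
    then have "z \<in> L"
      using ideal_add[OF L l c(1)] by blast
    have "c \<in> add z (neg l)" "l \<in> add z (neg c)"
      using add_reversible[OF z] by simp_all
    then have "z \<notin> rad N"
      using mem_rad_if_mem_add_neg[OF N _ True] c(2) by blast
    have "mult k l \<in> mult k ` add z (neg c)"
      using \<open>l \<in> add z (neg c)\<close> by (rule imageI)
    then have "mult k l \<in> add (mult k z) (neg (mult k c))"
      by (simp add: distrib mult_neg_right)
    then show ?thesis
      using ideal_diff[OF \<open>ideal P\<close> outside_rad[OF k \<open>z \<in> L\<close> \<open>z \<notin> rad N\<close>] outside_rad[OF k c]]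
      by blast
  qed
  then have "ideal_prod K L \<subseteq> P"
    using ideal_prod_subset[OF \<open>ideal P\<close>] by blast
  with prod_P show False ..
qed

lemma phi_primary_if_ideal_prod_property:
  assumes N: "ideal N" "N \<noteq> UNIV"
    and prod_property: "\<And>K L. ideal K \<Longrightarrow> ideal L \<Longrightarrow> ideal_prod K L \<subseteq> N \<Longrightarrow>
      \<not> ideal_prod K L \<subseteq> phi N \<Longrightarrow> K \<subseteq> N \<or> L \<subseteq> rad N"
  shows "phi_primary add mult zero one phi N"
  unfolding phi_primary_def
proof (intro conjI allI impI N)
  fix a b assume ab: "mult a b \<in> N \<and> mult a b \<notin> phi N"
  let ?K = "range (\<lambda>r. mult r a)" and ?L = "range (\<lambda>r. mult r b)"
  have "ideal_prod ?K ?L \<subseteq> range (\<lambda>r. mult r (mult a b))"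
  proof (rule ideal_prod_subset[OF ideal_range_mult])
    fix k l assume "k \<in> ?K" "l \<in> ?L"
    then obtain r s where "k = mult r a" "l = mult s b"
      by blast
    then have "mult k l = mult (mult r s) (mult a b)"
      by (simp add: mult_assoc mult_comm mult_left_commute)
    then show "mult k l \<in> range (\<lambda>r. mult r (mult a b))"
      by simp
  qed
  also have "\<dots> \<subseteq> N"
    using ideal_mult_left[OF N(1)] ab by blast
  finally have "ideal_prod ?K ?L \<subseteq> N" .
  moreover have "a \<in> ?K" "b \<in> ?L"
    by (rule mem_range_mult_self)+
  moreover from this have "\<not> ideal_prod ?K ?L \<subseteq> phi N"
    using mem_ideal_prod[of a ?K b ?L] ab by blast
  ultimately have "a \<in> N \<or> b \<in> rad N"
    using prod_property[OF ideal_range_mult ideal_range_mult] by blast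
  then show "a \<in> N \<or> (\<exists>k\<ge>1. pow b k \<in> N)"
    unfolding hradical_def by blast
qed

end

theorem mainTheorem2:
  fixes add :: "'a \<Rightarrow> 'a \<Rightarrow> 'a set" and mult :: "'a \<Rightarrow> 'a \<Rightarrow> 'a"
    and zero one :: 'a and phi :: "'a set \<Rightarrow> 'a set" and N :: "'a set"
  assumes "krasner_hyperring add mult zero one"
    and "hyperideal add mult zero N" and "N \<noteq> UNIV"
    and "\<forall>I. hyperideal add mult zero I \<longrightarrow> hyperideal add mult zero (phi I) \<or> phi I = {}"
    and "phi N \<subseteq> N"
  shows "(phi_primary add mult zero one phi N \<longleftrightarrow>
           (\<forall>a. a \<notin> hradical mult one N \<longrightarrow> hcolon mult N a = N \<union> hcolon mult (phi N) a))
       \<and> ((\<forall>a. a \<notin> hradical mult one N \<longrightarrow> hcolon mult N a = N \<union> hcolon mult (phi N) a) \<longleftrightarrow>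
           (\<forall>a. a \<notin> hradical mult one N \<longrightarrow>
              hcolon mult N a = N \<or> hcolon mult N a = hcolon mult (phi N) a))
       \<and> ((\<forall>a. a \<notin> hradical mult one N \<longrightarrow>
              hcolon mult N a = N \<or> hcolon mult N a = hcolon mult (phi N) a) \<longleftrightarrow>
           (\<forall>K L. hyperideal add mult zero K \<longrightarrow> hyperideal add mult zero L \<longrightarrow>
              hideal_prod add mult zero K L \<subseteq> N \<longrightarrow> \<not> hideal_prod add mult zero K L \<subseteq> phi N \<longrightarrow>
              K \<subseteq> N \<or> L \<subseteq> hradical mult one N))"
    (is "(?i \<longleftrightarrow> ?ii) \<and> (_ \<longleftrightarrow> ?iii) \<and> (_ \<longleftrightarrow> ?iv)")
proof -
  interpret comm_krasner_hyperring add mult zero one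
    by (rule comm_krasner_hyperring.intro) (fact assms(1))
  have phi_N: "ideal (phi N) \<or> phi N = {}"
    using assms(2,4) by blast
  have "?ii" if "?i"
    using colon_eq_union_if_phi_primary[OF that assms(5)] by simp
  moreover have "?iii" if "?ii"
    using colon_eq_cases_if_colon_eq_union[OF assms(2) phi_N] that by simp
  moreover have "?iv" if "?iii"
    using ideal_prod_property_if_colon_eq_cases[OF assms(2) phi_N] that by simp
  moreover have "?i" if "?iv"
    using phi_primary_if_ideal_prod_property[OF assms(2,3)] that by simp
  ultimately show ?thesis
    by argo
qed

end
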